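(* 1. If an infinite binary word $w$ is uniformly recurrent and of bounded width, then $w$ is bounded weak abelian periodic. 2. There exists an infinite binary uniformly recurrent word which is weak abelian periodic but not of bounded width.
   Context: For a finite word $u$, $|u|_a$ is the number of occurrences of the letter $a$ in $u$, and $\rho_a(u)=|u|_a/|u|$ for nonempty $u$. An infinite word $w$ over a finite alphabet $\Sigma$ is weak abelian periodic (WAP) if $w=v_0v_1v_2\cdots$ with $v_0$ finite and $v_1,v_2,\dots$ nonempty finite words such that $\rho_a(v_i)=\rho_a(v_j)$ for all $a\in\Sigma$ and all $i,j\ge1$; it is bounded WAP if such a factorization exists with $|v_i|\le C$ for all $i$, for some constant $C$. An infinite word is uniformly recurrent if every factor occurs infinitely often and with bounded gaps between consecutive occurrences. The graphic $g_w$ of a binary word $w=w_1w_2\cdots$ is the piecewise linear function with $g_w(n)=|w_1\cdots w_n|_1-|w_1\cdots w_n|_0$ for integers $n\ge0$ and linear in between (steps $(1,-1)$ for $0$ and $(1,1)$ for $1$). A binary infinite word $w$ is of bounded width if there exist rationals $a,b_1,b_2$ with $ax+b_1\le g_w(x)\le ax+b_2$ for all $x\ge0$. *)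

theory Defs
  imports Complex_Main
begin

text \<open>Infinite words over an alphabet 'a are functions nat => 'a (positions 0,1,2,...).
  Binary words are words over bool, the letter 1 being True and 0 being False.\<close>

definition cnt :: "(nat \<Rightarrow> 'a) \<Rightarrow> 'a \<Rightarrow> nat \<Rightarrow> nat \<Rightarrow> nat" where
  "cnt w a m n = card {k. m \<le> k \<and> k < n \<and> w k = a}"

text \<open>A factorization w = v0 v1 v2 ... is given by strictly increasing cut points p:
  v0 = w[0, p 0), and v(i+1) = w[p i, p (Suc i)) (nonempty since p is strictly increasing).\<close>
definition WAP :: "(nat \<Rightarrow> 'a) \<Rightarrow> bool" where
  "WAP w \<longleftrightarrow> (\<exists>p. strict_mono p \<and>
     (\<forall>a i j. real (cnt w a (p i) (p (Suc i))) / real (p (Suc i) - p i)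
             = real (cnt w a (p j) (p (Suc j))) / real (p (Suc j) - p j)))"

definition bounded_WAP :: "(nat \<Rightarrow> 'a) \<Rightarrow> bool" where
  "bounded_WAP w \<longleftrightarrow> (\<exists>p C. strict_mono p \<and>
     (\<forall>a i j. real (cnt w a (p i) (p (Suc i))) / real (p (Suc i) - p i)
             = real (cnt w a (p j) (p (Suc j))) / real (p (Suc j) - p j)) \<and>
     (\<forall>i. p (Suc i) - p i \<le> C))"

definition occurs_at :: "(nat \<Rightarrow> 'a) \<Rightarrow> 'a list \<Rightarrow> nat \<Rightarrow> bool" where
  "occurs_at w u i \<longleftrightarrow> (\<forall>j < length u. w (i + j) = u ! j)"

definition is_factor :: "(nat \<Rightarrow> 'a) \<Rightarrow> 'a list \<Rightarrow> bool" where
  "is_factor w u \<longleftrightarrow> (\<exists>i. occurs_at w u i)"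

definition uniformly_recurrent :: "(nat \<Rightarrow> 'a) \<Rightarrow> bool" where
  "uniformly_recurrent w \<longleftrightarrow> (\<forall>u. is_factor w u \<longrightarrow>
     infinite {i. occurs_at w u i} \<and>
     (\<exists>C. \<forall>i. occurs_at w u i \<longrightarrow> (\<exists>k. i < k \<and> k \<le> i + C \<and> occurs_at w u k)))"

definition graphic_nat :: "(nat \<Rightarrow> bool) \<Rightarrow> nat \<Rightarrow> int" where
  "graphic_nat w n = int (cnt w True 0 n) - int (cnt w False 0 n)"

text \<open>Piecewise linear interpolation, for x >= 0.\<close>
definition graphic :: "(nat \<Rightarrow> bool) \<Rightarrow> real \<Rightarrow> real" where
  "graphic w x = (let n = nat \<lfloor>x\<rfloor> in
     of_int (graphic_nat w n) + (x - real n) * of_int (graphic_nat w (Suc n) - graphic_nat w n))"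

definition bounded_width :: "(nat \<Rightarrow> bool) \<Rightarrow> bool" where
  "bounded_width w \<longleftrightarrow> (\<exists>a b1 b2 :: rat. \<forall>x :: real. x \<ge> 0 \<longrightarrow>
     of_rat a * x + of_rat b1 \<le> graphic w x \<and> graphic w x \<le> of_rat a * x + of_rat b2)"

end

theory Submission
  imports Defs "HOL-Library.Infinite_Set"
begin

text \<open>
  If the graphic of a binary word stays in a strip around a line of rational slope a, then with
  (1 + a)/2 = r/s the integer discrepancy s |w[0,n)|_1 - r n is bounded and takes finitely many
  values. Choose a factor along which the discrepancy rises from the least to the largest value
  it takes infinitely often; from some point on, every occurrence of that factor ends at the
  largest value. Cutting the word right after these occurrences gives blocks with equal
  discrepancy at both ends, i.e. with 1-frequency exactly r/s, and uniform recurrence bounds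
  their lengths.

  The counterexample is the fixed point of 0 \<mapsto> 001, 1 \<mapsto> 110. Its graphic equals -1 at every
  power of 3, which yields the weak abelian factorisation with cut points 3^(i+1) and forces
  slope 0 on any strip, yet it reaches k - 2 at the k-th of the positions 2, 7, 22, ....
  Uniform recurrence holds because a factor of length at most 3^k is read off two consecutive
  blocks of length 3^k, which are determined by two consecutive letters, and every pair of
  letters occurs in every block of 9 letters.
\<close>

lemma cnt_empty [simp]: "cnt w a m m = 0"
  unfolding cnt_def by auto

lemma cnt_Suc: "m \<le> n \<Longrightarrow> cnt w a m (Suc n) = cnt w a m n + (if w n = a then 1 else 0)"
proof -
  assume "m \<le> n"
  then have "{k. m \<le> k \<and> k < Suc n \<and> w k = a} =
      {k. m \<le> k \<and> k < n \<and> w k = a} \<union> (if w n = a then {n} else {})"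
    by (auto simp: less_Suc_eq)
  then show ?thesis
    unfolding cnt_def by (simp add: card_Un_disjoint)
qed

lemma cnt_add:
  assumes "m \<le> n" "n \<le> q"
  shows "cnt w a m q = cnt w a m n + cnt w a n q"
  using assms(2) by (induction q rule: dec_induct) (use assms(1) in \<open>auto simp: cnt_Suc\<close>)

lemma cnt_True_add_False:
  assumes "m \<le> n"
  shows "cnt w True m n + cnt w False m n = n - m"
  using assms by (induction n rule: dec_induct) (auto simp: cnt_Suc Suc_diff_le)

lemma cnt_occurs_at: "occurs_at w u i \<Longrightarrow> cnt w a i (i + length u) = count_list u a"
proof (induction u arbitrary: i)
  case Nil
  then show ?case by simp
next
  case (Cons x u)
  then have "w i = x" "occurs_at w u (Suc i)"
    unfolding occurs_at_def by (auto dest: spec[of _ 0] spec[of _ "Suc _"])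
  moreover have "cnt w a i (i + length (x # u)) = cnt w a i (Suc i) + cnt w a (Suc i) (Suc i + length u)"
    using cnt_add[of i "Suc i" "i + length (x # u)"] by simp
  ultimately show ?case
    using Cons.IH[of "Suc i"] cnt_Suc[of i i w a] by simp
qed

definition discrepancy :: "int \<Rightarrow> int \<Rightarrow> (nat \<Rightarrow> bool) \<Rightarrow> nat \<Rightarrow> int" where
  "discrepancy r s w n = s * int (cnt w True 0 n) - r * int n"

lemma graphic_nat_eq_discrepancy: "graphic_nat w n = discrepancy 1 2 w n"
  using cnt_True_add_False[of 0 n w] unfolding graphic_nat_def discrepancy_def by simp

lemma graphic_of_nat: "graphic w (real n) = of_int (graphic_nat w n)"
  unfolding graphic_def by simp

lemma discrepancy_diff:
  assumes "m \<le> n"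
  shows "discrepancy r s w n - discrepancy r s w m = s * int (cnt w True m n) - r * int (n - m)"
  using assms cnt_add[of 0 m n w True] unfolding discrepancy_def by (simp add: algebra_simps of_nat_diff)

lemma frequency_if_discrepancy_eq:
  assumes "m < n" "s \<noteq> 0" "discrepancy r s w m = discrepancy r s w n"
  shows "real (cnt w a m n) / real (n - m) = (if a then r / s else 1 - r / s)"
proof -
  have "s * int (cnt w True m n) = r * int (n - m)"
    using discrepancy_diff[of m n r s w] assms by simp
  then have "real_of_int s * real (cnt w True m n) = real_of_int r * real (n - m)"
    by (metis of_int_mult of_int_of_nat_eq)
  then have True_freq: "real (cnt w True m n) / real (n - m) = r / s"
    using assms by (simp add: field_simps)
  have "real (cnt w False m n) = real (n - m) - real (cnt w True m n)"
    using cnt_True_add_False[of m n w] assms by simp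
  then have "real (cnt w False m n) / real (n - m) = 1 - real (cnt w True m n) / real (n - m)"
    using assms by (simp add: diff_divide_distrib)
  then show ?thesis
    using True_freq by (cases a) simp_all
qed

lemma equal_frequencies_if_discrepancy_constant:
  assumes "strict_mono p" "s \<noteq> 0" "\<And>i. discrepancy r s w (p i) = c"
  shows "\<forall>a i j. real (cnt w a (p i) (p (Suc i))) / real (p (Suc i) - p i)
                = real (cnt w a (p j) (p (Suc j))) / real (p (Suc j) - p j)"
proof (intro allI)
  fix a i j
  have "real (cnt w a (p k) (p (Suc k))) / real (p (Suc k) - p k) = (if a then r / s else 1 - r / s)"
    for k using assms by (intro frequency_if_discrepancy_eq) (simp_all add: strict_mono_Suc_iff)
  then show "real (cnt w a (p i) (p (Suc i))) / real (p (Suc i) - p i)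
           = real (cnt w a (p j) (p (Suc j))) / real (p (Suc j) - p j)"
    by presburger
qed

lemma bounded_width_graphic_nat:
  assumes "bounded_width w"
  obtains a :: rat and B :: real where "\<And>n. \<bar>of_int (graphic_nat w n) - of_rat a * real n\<bar> \<le> B"
proof -
  obtain a b1 b2 :: rat where bounds: "\<And>x::real. x \<ge> 0 \<Longrightarrow>
      of_rat a * x + of_rat b1 \<le> graphic w x \<and> graphic w x \<le> of_rat a * x + of_rat b2"
    using assms unfolding bounded_width_def by blast
  have "\<bar>of_int (graphic_nat w n) - of_rat a * real n\<bar> \<le> max (- of_rat b1) (of_rat b2)" for n
    using bounds[of "real n"] by (auto simp: graphic_of_nat abs_le_iff le_max_iff_disj)
  then show thesis
    by (rule that)
qed

lemma bounded_width_finite_discrepancy: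
  assumes "bounded_width w"
  obtains r s where "s > 0" "finite (range (discrepancy r s w))"
proof -
  obtain a B where bound: "\<And>n. \<bar>of_int (graphic_nat w n) - of_rat a * real n\<bar> \<le> B"
    using bounded_width_graphic_nat[OF assms] by blast
  obtain r s where rs: "quotient_of ((1 + a) / 2) = (r, s)"
    by fastforce
  have s: "s > 0"
    using quotient_of_denom_pos[OF rs] .
  have "(of_int r / of_int s :: real) = (1 + of_rat a) / 2"
    using quotient_of_div[OF rs] by (metis of_rat_add of_rat_divide of_rat_numeral_eq of_rat_of_int_eq of_rat_1)
  then have r: "real_of_int r = real_of_int s * (1 + of_rat a) / 2"
    using s by (simp add: field_simps)
  define K where "K = \<lceil>real_of_int s / 2 * B\<rceil>"
  have "\<bar>discrepancy r s w n\<bar> \<le> K" for n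
  proof -
    have eq: "real_of_int (discrepancy r s w n) = real_of_int s / 2 * (of_int (graphic_nat w n) - of_rat a * real n)"
      unfolding graphic_nat_eq_discrepancy discrepancy_def by (simp add: r algebra_simps)
    have "\<bar>real_of_int (discrepancy r s w n)\<bar> = real_of_int s / 2 * \<bar>of_int (graphic_nat w n) - of_rat a * real n\<bar>"
      unfolding eq using s by (simp add: abs_mult)
    also have "\<dots> \<le> real_of_int s / 2 * B"
      using bound[of n] s by (intro mult_left_mono) simp_all
    finally have "\<bar>real_of_int (discrepancy r s w n)\<bar> \<le> real_of_int s / 2 * B" .
    then show ?thesis
      unfolding K_def by linarith
  qed
  then have "range (discrepancy r s w) \<subseteq> {-K..K}"
    by (auto simp: abs_le_iff minus_le_iff)
  then show thesis
    using s that finite_subset by blast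
qed

lemma eventually_recurrent_values:
  fixes f :: "nat \<Rightarrow> 'b"
  assumes "finite (range f)"
  shows "\<exists>N. \<forall>n\<ge>N. infinite {m. f m = f n}"
proof -
  define B where "B = {v \<in> range f. finite {n. f n = v}}"
  have "finite (\<Union>v\<in>B. {n. f n = v})"
    using assms unfolding B_def by auto
  then obtain N where N: "\<And>n. n \<in> (\<Union>v\<in>B. {n. f n = v}) \<Longrightarrow> n < N"
    by (metis finite_nat_set_iff_bounded)
  have "infinite {m. f m = f n}" if "N \<le> n" for n
    using N[of n] that unfolding B_def by auto
  then show ?thesis
    by blast
qed

lemma uniformly_recurrent_occurrences:
  assumes "uniformly_recurrent w" "occurs_at w u i"
  obtains q C where "q 0 = i" "strict_mono q" "\<And>n. q (Suc n) \<le> q n + C" "\<And>n. occurs_at w u (q n)"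
proof -
  obtain C where next_occ: "\<And>i. occurs_at w u i \<Longrightarrow> \<exists>k. i < k \<and> k \<le> i + C \<and> occurs_at w u k"
    using assms unfolding uniformly_recurrent_def is_factor_def by blast
  obtain q where q: "\<forall>n. (occurs_at w u (q n) \<and> (n = 0 \<longrightarrow> q n = i)) \<and>
      q n < q (Suc n) \<and> q (Suc n) \<le> q n + C"
    by (rule dependent_nat_choice[of "\<lambda>n k. occurs_at w u k \<and> (n = 0 \<longrightarrow> k = i)"
        "\<lambda>_ k k'. k < k' \<and> k' \<le> k + C", THEN exE]) (use assms(2) next_occ in auto)
  then show thesis
    by (intro that[of q C]) (simp_all add: strict_mono_Suc_iff)
qed

lemma uniformly_recurrentI:
  assumes "\<And>u. \<exists>C. \<forall>i. occurs_at w u i \<longrightarrow> (\<exists>k. i < k \<and> k \<le> i + C \<and> occurs_at w u k)"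
  shows "uniformly_recurrent w"
  unfolding uniformly_recurrent_def
proof (intro allI impI conjI)
  fix u
  assume "is_factor w u"
  then have nonempty: "{i. occurs_at w u i} \<noteq> {}"
    unfolding is_factor_def by blast
  obtain C where C: "\<And>i. occurs_at w u i \<Longrightarrow> \<exists>k. i < k \<and> k \<le> i + C \<and> occurs_at w u k"
    using assms by blast
  then show "\<exists>C. \<forall>i. occurs_at w u i \<longrightarrow> (\<exists>k. i < k \<and> k \<le> i + C \<and> occurs_at w u k)"
    by blast
  show "infinite {i. occurs_at w u i}"
  proof
    assume fin: "finite {i. occurs_at w u i}"
    then obtain k where "Max {i. occurs_at w u i} < k" "occurs_at w u k"
      using C Max_in[OF fin nonempty] by blast
    then show False
      using Max_ge[OF fin, of k] by simp
  qed
qed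

lemma uniformly_recurrent_returns_to_level:
  fixes H :: "nat \<Rightarrow> 'b::linordered_ab_group_add"
  assumes ur: "uniformly_recurrent w" and fin: "finite (range H)"
    and increment: "\<And>u i j. occurs_at w u i \<Longrightarrow> occurs_at w u j \<Longrightarrow>
      H (i + length u) - H i = H (j + length u) - H j"
  obtains p C where "strict_mono p" "\<And>i. p (Suc i) - p i \<le> C" "\<And>i. H (p i) = H (p 0)"
proof -
  obtain N where N: "\<And>n. n \<ge> N \<Longrightarrow> infinite {m. H m = H n}"
    using eventually_recurrent_values[OF fin] by blast
  define V where "V = {v. infinite {n. H n = v}}"
  have "V \<subseteq> range H"
    unfolding V_def by (fastforce dest: not_finite_existsD)
  then have "finite V"
    using fin finite_subset by blast
  moreover have HV: "H n \<in> V" if "n \<ge> N" for n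
    using N[OF that] unfolding V_def by simp
  ultimately have between: "Min V \<le> H n \<and> H n \<le> Max V" if "n \<ge> N" for n
    using that by simp
  have "V \<noteq> {}"
    using HV by blast
  then have "Min V \<in> V" "Max V \<in> V"
    using \<open>finite V\<close> by simp_all
  then obtain i0 j0 where i0: "i0 \<ge> N" "H i0 = Min V" and j0: "j0 \<ge> Suc i0" "H j0 = Max V"
    unfolding V_def infinite_nat_iff_unbounded_le by blast
  define u where "u = map w [i0..<j0]"
  have "occurs_at w u i0"
    unfolding occurs_at_def u_def by simp
  then obtain q C where q: "q 0 = i0" "strict_mono q" "\<And>n. q (Suc n) \<le> q n + C" "\<And>n. occurs_at w u (q n)"
    using uniformly_recurrent_occurrences[OF ur] by blast
  have level: "H (q n + length u) = Max V" for n
  proof -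
    have "q n \<ge> N"
      using i0(1) q(1,2) strict_mono_less_eq[of q 0 n] by simp
    moreover have "H (q n + length u) = H (q n) + (Max V - Min V)"
      using increment[OF q(4)[of n] q(4)[of 0]] q(1) i0(2) j0 unfolding u_def
      by (simp add: algebra_simps)
    ultimately show ?thesis
      using between[of "q n"] between[of "q n + length u"] by (simp add: le_diff_eq order.antisym)
  qed
  have "strict_mono (\<lambda>n. q n + length u)"
    using q(2) by (simp add: strict_mono_def)
  moreover have "(q (Suc n) + length u) - (q n + length u) \<le> C" for n
    using q(3)[of n] by simp
  ultimately show thesis
    using that[of "\<lambda>n. q n + length u" C] level by simp
qed

theorem bounded_width_imp_bounded_WAP:
  assumes ur: "uniformly_recurrent w" and bw: "bounded_width w"
  shows "bounded_WAP w"
proof -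
  obtain r s where s: "s > 0" and fin: "finite (range (discrepancy r s w))"
    using bounded_width_finite_discrepancy[OF bw] by blast
  have "discrepancy r s w (i + length u) - discrepancy r s w i = s * int (count_list u True) - r * int (length u)"
    if "occurs_at w u i" for u i
    using discrepancy_diff[of i "i + length u" r s w] cnt_occurs_at[OF that] by simp
  then obtain p C where p: "strict_mono p" "\<And>i. p (Suc i) - p i \<le> C"
      "\<And>i. discrepancy r s w (p i) = discrepancy r s w (p 0)"
    using uniformly_recurrent_returns_to_level[OF ur fin] by metis
  then show ?thesis
    unfolding bounded_WAP_def using s equal_frequencies_if_discrepancy_constant[OF p(1) _ p(3)] by blast
qed

text \<open>The fixed point of 0 \<mapsto> 001, 1 \<mapsto> 110: morse3 n is the parity of the number of
  digits 2 in the ternary expansion of n.\<close>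

fun morse3 :: "nat \<Rightarrow> bool" where
  "morse3 n = (if n = 0 then False else morse3 (n div 3) \<noteq> (n mod 3 = 2))"

declare morse3.simps [simp del]

lemma morse3_0 [simp]: "morse3 0 = False"
  by (simp add: morse3.simps)

lemma morse3_digit: "r < 3 \<Longrightarrow> morse3 (3 * n + r) = (morse3 n \<noteq> (r = 2))"
  by (subst morse3.simps) auto

lemma morse3_block: "t < 3 ^ k \<Longrightarrow> morse3 (3 ^ k * j + t) = (morse3 j \<noteq> morse3 t)"
proof (induction k arbitrary: t)
  case 0
  then show ?case by simp
next
  case (Suc k)
  have "3 ^ Suc k * j + t = 3 * (3 ^ k * j + t div 3) + t mod 3"
    by simp
  then have "morse3 (3 ^ Suc k * j + t) = (morse3 (3 ^ k * j + t div 3) \<noteq> (t mod 3 = 2))"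
    by (metis morse3_digit mod_less_divisor zero_less_numeral)
  also have "\<dots> = (morse3 j \<noteq> (morse3 (t div 3) \<noteq> (t mod 3 = 2)))"
    using Suc.IH[of "t div 3"] Suc.prems by auto
  also have "(morse3 (t div 3) \<noteq> (t mod 3 = 2)) = morse3 t"
    using morse3_digit[of "t mod 3" "t div 3"] by simp
  finally show ?case .
qed

lemma morse3_pairs: "\<exists>t<6. morse3 t = x \<and> morse3 (t + 1) = y"
proof -
  have "morse3 1 = False" "morse3 2 = True" "morse3 3 = False" "morse3 5 = True" "morse3 6 = True"
    by (simp_all add: morse3.simps)
  then show ?thesis
    by (intro exI[of _ "if x then if y then 5 else 2 else if y then 1 else 0"])
      (cases x; cases y; simp add: numeral_2_eq_2[symmetric])
qed

lemma morse3_pairs_in_block: "\<exists>t<6. morse3 (9 * m + t) = x \<and> morse3 (9 * m + t + 1) = y"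
proof -
  obtain t where t: "t < 6" "morse3 t = (x \<noteq> morse3 m)" "morse3 (t + 1) = (y \<noteq> morse3 m)"
    using morse3_pairs[of "x \<noteq> morse3 m" "y \<noteq> morse3 m"] by blast
  have "morse3 (9 * m + t) = (morse3 m \<noteq> morse3 t)" "morse3 (9 * m + t + 1) = (morse3 m \<noteq> morse3 (t + 1))"
    using morse3_block[of t 2 m] morse3_block[of "t + 1" 2 m] t(1) by simp_all
  then show ?thesis
    using t by (intro exI[of _ t]) (cases "morse3 m"; simp)
qed

lemma morse3_two_blocks:
  assumes "morse3 j' = morse3 j" "morse3 (Suc j') = morse3 (Suc j)" "d < 2 * 3 ^ k"
  shows "morse3 (3 ^ k * j' + d) = morse3 (3 ^ k * j + d)"
proof (cases "d < 3 ^ k")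
  case True
  then show ?thesis
    using assms(1) morse3_block by simp
next
  case False
  then have e: "d - 3 ^ k < 3 ^ k" and shift: "3 ^ k * i + d = 3 ^ k * Suc i + (d - 3 ^ k)" for i
    using assms(3) by auto
  show ?thesis
    unfolding shift morse3_block[OF e] using assms(2) by simp
qed

lemma morse3_occurs_at_block:
  assumes "occurs_at morse3 u (3 ^ k * j + d)" "d + length u \<le> 2 * 3 ^ k"
    and "morse3 j' = morse3 j" "morse3 (Suc j') = morse3 (Suc j)"
  shows "occurs_at morse3 u (3 ^ k * j' + d)"
  unfolding occurs_at_def
proof (intro allI impI)
  fix i
  assume "i < length u"
  then have "morse3 (3 ^ k * j' + (d + i)) = morse3 (3 ^ k * j + (d + i))"
    using assms(2-) by (intro morse3_two_blocks) simp_all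
  then show "morse3 (3 ^ k * j' + d + i) = u ! i"
    using assms(1) \<open>i < length u\<close> unfolding occurs_at_def by (simp add: add.assoc)
qed

lemma morse3_uniformly_recurrent: "uniformly_recurrent morse3"
proof (rule uniformly_recurrentI)
  fix u :: "bool list"
  define k where "k = length u"
  have "\<exists>i'. i < i' \<and> i' \<le> i + 14 * 3 ^ k \<and> occurs_at morse3 u i'" if occ: "occurs_at morse3 u i" for i
  proof -
    define j d where "j = i div 3 ^ k" and "d = i mod 3 ^ k"
    have i: "i = 3 ^ k * j + d"
      unfolding j_def d_def by simp
    have "length u < 2 ^ k"
      unfolding k_def by (rule less_exp)
    also have "(2::nat) ^ k \<le> 3 ^ k"
      by (rule power_mono) simp_all
    finally have "d < 3 ^ k" "length u < 3 ^ k"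
      unfolding d_def by simp_all
    then have short: "d + length u \<le> 2 * 3 ^ k"
      by simp
    define m where "m = j div 9 + 1"
    obtain t where t: "t < 6" "morse3 (9 * m + t) = morse3 j" "morse3 (Suc (9 * m + t)) = morse3 (Suc j)"
      using morse3_pairs_in_block[of m] by auto
    have "Suc j \<le> 9 * m + t" "9 * m + t \<le> j + 14"
      unfolding m_def using t(1) by presburger+
    then have "3 ^ k * Suc j \<le> 3 ^ k * (9 * m + t)" "3 ^ k * (9 * m + t) \<le> 3 ^ k * (j + 14)"
      by (simp_all only: mult_le_mono2)
    then have "i < 3 ^ k * (9 * m + t) + d" "3 ^ k * (9 * m + t) + d \<le> i + 14 * 3 ^ k"
      using \<open>d < 3 ^ k\<close> unfolding i by (simp_all add: algebra_simps)
    moreover have "occurs_at morse3 u (3 ^ k * (9 * m + t) + d)"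
      using morse3_occurs_at_block[OF occ[unfolded i] short t(2,3)] .
    ultimately show ?thesis
      by blast
  qed
  then show "\<exists>C. \<forall>i. occurs_at morse3 u i \<longrightarrow> (\<exists>i'. i < i' \<and> i' \<le> i + C \<and> occurs_at morse3 u i')"
    by blast
qed

lemma cnt_morse3_triple: "cnt morse3 True 0 (3 * n) = n + cnt morse3 True 0 n"
proof (induction n)
  case 0
  then show ?case by simp
next
  case (Suc n)
  have triple: "3 * Suc n = Suc (Suc (Suc (3 * n)))"
    by simp
  have "morse3 (3 * n) = morse3 n" "morse3 (Suc (3 * n)) = morse3 n"
      "morse3 (Suc (Suc (3 * n))) = (\<not> morse3 n)"
    using morse3_digit[of 0 n] morse3_digit[of 1 n] morse3_digit[of 2 n] by simp_all
  then show ?case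
    unfolding triple using Suc by (simp add: cnt_Suc)
qed

lemma graphic_nat_morse3_triple: "graphic_nat morse3 (3 * n) = graphic_nat morse3 n"
  using cnt_morse3_triple[of n] by (simp add: graphic_nat_eq_discrepancy discrepancy_def)

lemma graphic_nat_morse3_triple_Suc:
  "graphic_nat morse3 (3 * n + 1) = graphic_nat morse3 n + (if morse3 n then 1 else -1)"
  using cnt_morse3_triple[of n] morse3_digit[of 0 n]
  by (simp add: graphic_nat_eq_discrepancy discrepancy_def cnt_Suc)

lemma graphic_nat_morse3_power: "graphic_nat morse3 (3 ^ k) = -1"
proof (induction k)
  case 0
  then show ?case
    using cnt_Suc[of 0 0 morse3 True] by (simp add: graphic_nat_eq_discrepancy discrepancy_def)
next
  case (Suc k)
  then show ?case
    using graphic_nat_morse3_triple[of "3 ^ k"] by simp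
qed

primrec morse3_peak :: "nat \<Rightarrow> nat" where
  "morse3_peak 0 = 2"
| "morse3_peak (Suc k) = 3 * morse3_peak k + 1"

lemma morse3_at_peak: "morse3 (morse3_peak k)"
  using morse3_digit[of 1] by (induction k) (simp_all add: morse3.simps)

lemma graphic_nat_morse3_peak: "graphic_nat morse3 (morse3_peak k) = int k - 2"
proof (induction k)
  case 0
  have "cnt morse3 True 0 2 = 0"
    using cnt_Suc[of 0 0 morse3 True] cnt_Suc[of 0 1 morse3 True] morse3_digit[of 1 0]
    by (simp add: numeral_2_eq_2)
  then show ?case
    by (simp add: graphic_nat_eq_discrepancy discrepancy_def)
next
  case (Suc k)
  then show ?case
    using graphic_nat_morse3_triple_Suc[of "morse3_peak k"] morse3_at_peak[of k] by simp
qed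

lemma morse3_WAP: "WAP morse3"
proof -
  define p where "p i = (3::nat) ^ (i + 1)" for i
  have "strict_mono p"
    unfolding p_def by (intro strict_monoI) (simp add: power_strict_increasing)
  moreover have "discrepancy 1 2 morse3 (p i) = -1" for i
    unfolding p_def graphic_nat_eq_discrepancy[symmetric] by (rule graphic_nat_morse3_power)
  ultimately show ?thesis
    unfolding WAP_def using equal_frequencies_if_discrepancy_constant[of p 2 1 morse3 "-1"] by auto
qed

lemma morse3_not_bounded_width: "\<not> bounded_width morse3"
proof
  assume "bounded_width morse3"
  then obtain a B where bound: "\<And>n. \<bar>of_int (graphic_nat morse3 n) - of_rat a * real n\<bar> \<le> B"
    using bounded_width_graphic_nat by blast
  define \<alpha> :: real where "\<alpha> = of_rat a"
  have power_bound: "\<bar>\<alpha> * 3 ^ k\<bar> \<le> B + 1" for k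
    using bound[of "3 ^ k"] unfolding \<alpha>_def[symmetric]
    by (auto simp: graphic_nat_morse3_power abs_le_iff)
  have "\<alpha> = 0"
  proof (rule ccontr)
    assume "\<alpha> \<noteq> 0"
    moreover obtain k where "(B + 1) / \<bar>\<alpha>\<bar> < 3 ^ k"
      using real_arch_pow[of 3] by auto
    ultimately show False
      using power_bound[of k] by (simp add: abs_mult field_simps)
  qed
  moreover obtain k :: nat where "B + 2 < real k"
    using reals_Archimedean2 by blast
  ultimately show False
    using bound[of "morse3_peak k"] unfolding \<alpha>_def[symmetric] by (simp add: graphic_nat_morse3_peak)
qed

theorem proposition2:
  shows "(\<forall>w :: nat \<Rightarrow> bool. uniformly_recurrent w \<and> bounded_width w \<longrightarrow> bounded_WAP w) \<and>
         (\<exists>w :: nat \<Rightarrow> bool. uniformly_recurrent w \<and> WAP w \<and> \<not> bounded_width w)"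
  using bounded_width_imp_bounded_WAP morse3_uniformly_recurrent morse3_WAP morse3_not_bounded_width
  by blast

end
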